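(* Let $c,d\in\mathbb{R}_{>0}$ with $cd\le\frac14$. Consider a sequence of positive reals $z_0,z_1,z_2,\ldots$ with $z_0\le\frac1{2d}$ and $z_{n+1}\le c+dz_n^2$ for all $n\ge0$. Then $z_n\le3c$ for all $n\ge\log_2\frac1{cd}-1$. *)

theory Defs
  imports Complex_Main
begin

end

theory Submission
  imports Defs
begin

text \<open>For \<open>w n = d * z n\<close> we get \<open>w (Suc n) \<le> c * d + (w n)\<^sup>2\<close>. Since \<open>c * d \<le> 1/4\<close>, the
  bound \<open>w n \<le> 1/2\<close> propagates from \<open>n = 0\<close>, so \<open>(w n)\<^sup>2 \<le> w n / 2\<close> and the recursion
  becomes a contraction: \<open>w n \<le> 2 * c * d + (1/2) ^ (n + 1)\<close>. The condition on \<open>n\<close> guarantees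
  that \<open>(1/2) ^ (n + 1) \<le> c * d\<close>.\<close>

lemma quadratic_recursion_le_half:
  fixes a :: real and w :: "nat \<Rightarrow> real"
  assumes "a \<le> 1/4" and "\<And>n. w n \<ge> 0" and "w 0 \<le> 1/2"
    and "\<And>n. w (Suc n) \<le> a + (w n)\<^sup>2"
  shows "w n \<le> 1/2"
proof (induction n)
  case 0
  show ?case using assms(3) .
next
  case (Suc n)
  have "w n * w n \<le> 1/2 * (1/2)"
    using Suc.IH assms(2) by (intro mult_mono) auto
  then show ?case using assms(1) assms(4)[of n] by (simp add: power2_eq_square)
qed

lemma halving_recursion_bound:
  fixes a :: real and w :: "nat \<Rightarrow> real"
  assumes "a \<ge> 0" and "w 0 \<le> 1/2"
    and "\<And>n. w (Suc n) \<le> a + w n / 2"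
  shows "w n \<le> 2 * a + (1/2) ^ (n + 1)"
proof (induction n)
  case 0
  show ?case using assms(1,2) by simp
next
  case (Suc n)
  have "w (Suc n) \<le> a + (2 * a + (1/2) ^ (n + 1)) / 2"
    using assms(3)[of n] divide_right_mono[OF Suc.IH, of 2] by linarith
  also have "\<dots> = 2 * a + (1/2) ^ (Suc n + 1)" by simp
  finally show ?case .
qed

lemma half_power_le_if_log_le:
  fixes x :: real
  assumes "x > 0" and "log 2 (1 / x) - 1 \<le> real n"
  shows "(1/2) ^ (n + 1) \<le> x"
proof -
  have "1 / x = 2 powr log 2 (1 / x)" using assms(1) by simp
  also have "\<dots> \<le> 2 powr (real n + 1)" using assms(2) by (intro powr_mono) auto
  also have "\<dots> = 2 ^ (n + 1)" using powr_realpow[of 2 "n + 1"] by (simp add: add.commute)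
  finally have "1 / x \<le> 2 ^ (n + 1)" .
  then show ?thesis using assms(1) by (simp add: field_simps power_divide)
qed

theorem lemma4p7:
  fixes c d :: real and z :: "nat \<Rightarrow> real"
  assumes "c > 0" and "d > 0" and "c * d \<le> 1/4"
    and "\<And>n. z n > 0"
    and "z 0 \<le> 1 / (2 * d)"
    and "\<And>n. z (Suc n) \<le> c + d * (z n)^2"
  shows "\<forall>n::nat. real n \<ge> log 2 (1 / (c * d)) - 1 \<longrightarrow> z n \<le> 3 * c"
proof (intro allI impI)
  fix n :: nat
  assume n_large: "real n \<ge> log 2 (1 / (c * d)) - 1"
  define w where "w k = d * z k" for k
  have w_nonneg: "w k \<ge> 0" for k
    using assms(2,4) by (simp add: w_def less_imp_le)
  have w_0: "w 0 \<le> 1/2"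
    using assms(2,5) by (simp add: w_def field_simps)
  have w_step: "w (Suc k) \<le> c * d + (w k)\<^sup>2" for k
    using mult_left_mono[OF assms(6)[of k] less_imp_le[OF assms(2)]]
    by (simp add: w_def power2_eq_square algebra_simps)
  have w_sq: "(w k)\<^sup>2 \<le> w k / 2" for k
    using mult_left_mono[OF quadratic_recursion_le_half[OF assms(3) w_nonneg w_0 w_step] w_nonneg]
    by (simp add: power2_eq_square)
  have "w (Suc k) \<le> c * d + w k / 2" for k
    using w_step[of k] w_sq[of k] by linarith
  then have "w n \<le> 2 * (c * d) + (1/2) ^ (n + 1)"
    using assms(1,2) w_0 by (intro halving_recursion_bound) auto
  also have "\<dots> \<le> 3 * (c * d)"
    using half_power_le_if_log_le[OF _ n_large] assms(1,2) by simp
  finally show "z n \<le> 3 * c" using assms(2) by (simp add: w_def)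
qed

end
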